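(* Let $r$ be a positive integer. For all sufficiently large $n\in F_r$, $P_1(n)^4\nmid n$.
   Context: For a positive integer $r$, $S_r$ is the multiplicative arithmetic function with $S_r(p^{\alpha})=0$ if $p\leq r$ and $S_r(p^{\alpha})=p^{\alpha-1}(p-r)$ if $p>r$, for all primes $p$ and positive integers $\alpha$. $B_r=\{n\in\mathbb{N}: S_r(n)>0\}$ (positive integers whose smallest prime factor exceeds $r$, together with $1$). $F_r$ is the set of $n\in B_r$ such that $S_r(n)<S_r(m)$ for all $m\in B_r$ with $m>n$. $P_1(n)$ denotes the largest prime divisor of $n$. *)

theory Defs
  imports "HOL-Computational_Algebra.Primes"
begin

definition S :: "nat \<Rightarrow> nat \<Rightarrow> int" where
  "S r n = (\<Prod>p\<in>prime_factors n.
      (if p \<le> r then 0 else int p ^ (multiplicity p n - 1) * (int p - int r)))"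

definition B :: "nat \<Rightarrow> nat set" where
  "B r = {n. n > 0 \<and> S r n > 0}"

definition F :: "nat \<Rightarrow> nat set" where
  "F r = {n \<in> B r. \<forall>m \<in> B r. m > n \<longrightarrow> S r n < S r m}"

definition P1 :: "nat \<Rightarrow> nat" where
  "P1 n = (if n \<le> 1 then 1 else Max (prime_factors n))"

end

theory Submission
  imports Defs Complex_Main
begin

text \<open>
  A member \<open>n\<close> of \<open>F r\<close> cannot contain a prime power \<open>p\<^sup>i\<^sup>+\<^sup>1\<close> with \<open>p\<^sup>i > q\<^sup>2 r!\<close> for
  a prime \<open>q > r\<close> not dividing \<open>n\<close>: replacing \<open>p\<^sup>i\<close> by \<open>q w\<close>, with \<open>w \<equiv> 1 (mod r!)\<close>
  and \<open>p\<^sup>i/q < w \<le> p\<^sup>i/(q - r)\<close>, gives a larger element of \<open>B r\<close> with no larger value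
  of \<open>S r\<close>, because \<open>S r n\<close> is \<open>n\<close> times the product of \<open>1 - r/p\<close> over the primes \<open>p\<close>
  dividing \<open>n\<close>.
  If \<open>p = P1 n\<close> is large and \<open>p\<^sup>4\<close> divides \<open>n\<close>, Erdos' central binomial argument
  yields a prime \<open>q\<close> with \<open>p < q \<le> 2 p\<^sup>4\<^sup>/\<^sup>3\<close>, so \<open>q\<^sup>2 r! < p\<^sup>3\<close>: impossible. Hence \<open>P1 n\<close> is
  bounded, and then a fixed prime \<open>Q\<close> above that bound caps every prime power of \<open>n\<close>,
  so \<open>n\<close> itself is bounded.
\<close>

lemma less_power_self:
  fixes p n :: nat
  assumes "1 < p"
  shows "n < p ^ n"
proof -
  have "n < 2 ^ n" by (rule less_exp)
  also have "\<dots> \<le> p ^ n" using assms by (intro power_mono) auto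
  finally show ?thesis .
qed

lemma multiplicity_le_self:
  assumes "prime (p::nat)" "k > 0"
  shows "multiplicity p k \<le> k"
proof -
  have "multiplicity p k < p ^ multiplicity p k"
    using prime_gt_1_nat[OF assms(1)] by (rule less_power_self)
  also have "\<dots> \<le> k" using assms(2) by (intro dvd_imp_le multiplicity_dvd)
  finally show ?thesis by simp
qed

lemma multiplicity_eq_card_prime_power_divisors:
  assumes "prime (p::nat)" "k > 0"
  shows "multiplicity p k = card {i\<in>{1..k}. p ^ i dvd k}"
proof -
  have "\<not> is_unit p" using prime_gt_1_nat[OF assms(1)] by simp
  hence "{i\<in>{1..k}. p ^ i dvd k} = {1..multiplicity p k}"
    using assms multiplicity_le_self[OF assms] multiplicity_geI[of k p] multiplicity_dvd'[of _ p k]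
    by fastforce
  thus ?thesis by simp
qed

lemma multiplicity_fact:
  assumes p: "prime (p::nat)"
  shows "multiplicity p (fact k :: nat) = (\<Sum>i\<in>{1..k}. k div p ^ i)"
proof (induction k)
  case 0
  then show ?case by simp
next
  case (Suc k)
  have p1: "p > 1" using p prime_gt_1_nat by blast
  have "k < p ^ Suc k"
    using less_power_self[OF p1, of "Suc k"] by simp
  hence IH: "multiplicity p (fact k :: nat) = (\<Sum>i\<in>{1..Suc k}. k div p ^ i)"
    using Suc.IH by simp
  have "multiplicity p (fact (Suc k) :: nat) = multiplicity p (Suc k) + multiplicity p (fact k :: nat)"
    unfolding fact_Suc of_nat_id using p by (intro prime_elem_multiplicity_mult_distrib) auto
  also have "multiplicity p (Suc k) = (\<Sum>i\<in>{1..Suc k}. if p ^ i dvd Suc k then 1 else 0)"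
    unfolding multiplicity_eq_card_prime_power_divisors[OF p zero_less_Suc]
    by (subst sum.inter_filter[symmetric]) auto
  also have "\<dots> + multiplicity p (fact k :: nat) = (\<Sum>i\<in>{1..Suc k}. Suc k div p ^ i)"
    unfolding IH sum.distrib[symmetric] using p1 by (intro sum.cong) (simp_all add: div_Suc dvd_eq_mod_eq_0)
  finally show ?case .
qed

lemma double_div_bounds:
  fixes m d :: nat
  assumes "d > 0"
  shows "2 * (m div d) \<le> (2 * m) div d" "(2 * m) div d \<le> 2 * (m div d) + 1"
proof -
  have "2 * m = 2 * (m mod d) + d * (2 * (m div d))"
    using mod_mult_div_eq[of m d] by (metis add_mult_distrib2 mult.left_commute)
  hence eq: "(2 * m) div d = 2 * (m div d) + (2 * (m mod d)) div d"
    using assms by simp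
  have "2 * (m mod d) < 2 * d" using assms by simp
  hence "(2 * (m mod d)) div d < 2" by (rule less_mult_imp_div_less)
  thus "2 * (m div d) \<le> (2 * m) div d" "(2 * m) div d \<le> 2 * (m div d) + 1"
    using eq by simp_all
qed

lemma multiplicity_central_binomial:
  assumes p: "prime (p::nat)"
  shows "multiplicity p ((2 * m) choose m) = (\<Sum>i\<in>{1..2*m}. (2 * m) div p ^ i - 2 * (m div p ^ i))"
proof -
  let ?C = "(2 * m) choose m"
  have p1: "p > 1" using p prime_gt_1_nat by blast
  have "(fact (2 * m) :: nat) = ?C * fact m * fact m"
    using binomial_fact_lemma[of m "2 * m"] by (simp add: mult_ac)
  hence "multiplicity p (fact (2 * m) :: nat)
      = multiplicity p ?C + 2 * multiplicity p (fact m :: nat)"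
    using p by (simp add: prime_elem_multiplicity_mult_distrib)
  hence "(\<Sum>i\<in>{1..2*m}. (2 * m) div p ^ i) = multiplicity p ?C + 2 * (\<Sum>i\<in>{1..m}. m div p ^ i)"
    by (simp only: multiplicity_fact[OF p])
  also have "(\<Sum>i\<in>{1..m}. m div p ^ i) = (\<Sum>i\<in>{1..2*m}. m div p ^ i)"
  proof (rule sum.mono_neutral_left)
    show "\<forall>i\<in>{1..2*m} - {1..m}. m div p ^ i = 0"
      using less_power_self[OF p1] by (auto intro!: div_less simp: not_le less_trans)
  qed auto
  finally have "(\<Sum>i\<in>{1..2*m}. (2 * m) div p ^ i)
      = multiplicity p ?C + (\<Sum>i\<in>{1..2*m}. 2 * (m div p ^ i))"
    by (simp add: sum_distrib_left)
  moreover have "(\<Sum>i\<in>{1..2*m}. (2 * m) div p ^ i)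
      = (\<Sum>i\<in>{1..2*m}. (2 * m) div p ^ i - 2 * (m div p ^ i)) + (\<Sum>i\<in>{1..2*m}. 2 * (m div p ^ i))"
    unfolding sum.distrib[symmetric] using double_div_bounds(1) p1 by (intro sum.cong) simp_all
  ultimately show ?thesis by simp
qed

text \<open>The summands in the formula above are \<open>0\<close> or \<open>1\<close>, and vanish once \<open>p\<^sup>i > 2m\<close>.\<close>
lemma prime_power_multiplicity_central_binomial_le:
  assumes p: "prime (p::nat)" and m: "m > 0"
  shows "p ^ multiplicity p ((2 * m) choose m) \<le> 2 * m"
proof (rule ccontr)
  let ?v = "multiplicity p ((2 * m) choose m)"
  assume "\<not> ?thesis"
  hence big: "2 * m < p ^ ?v" by simp
  have p1: "p > 1" using p prime_gt_1_nat by blast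
  define L where "L = (LEAST i. 2 * m < p ^ i)"
  have L: "2 * m < p ^ L" unfolding L_def using big by (rule LeastI)
  have Lv: "L \<le> ?v" unfolding L_def using big by (rule Least_le)
  have "?v \<le> (\<Sum>i\<in>{1..2*m}. if i < L then 1 else 0)"
    unfolding multiplicity_central_binomial[OF p]
  proof (rule sum_mono)
    fix i
    show "(2 * m) div p ^ i - 2 * (m div p ^ i) \<le> (if i < L then 1 else 0)"
    proof (cases "i < L")
      case False
      hence "p ^ L \<le> p ^ i" using p1 by (intro power_increasing) auto
      thus ?thesis using L False by simp
    qed (use double_div_bounds(2)[of "p ^ i" m] p1 in simp)
  qed
  also have "\<dots> = card {i\<in>{1..2*m}. i < L}"
    by (subst sum.inter_filter[symmetric]) auto
  also have "\<dots> \<le> card {1..<L}" by (rule card_mono) auto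
  also have "\<dots> < L" using L m by (cases L) auto
  finally show False using Lv by simp
qed

lemma central_binomial_le_power:
  assumes m: "m > 0" and x: "\<forall>l\<in>prime_factors ((2 * m) choose m). l \<le> x"
  shows "(2 * m) choose m \<le> (2 * m) ^ x"
proof -
  let ?C = "(2 * m) choose m"
  have "prime_factors ?C \<subseteq> {1..x}" using x by (auto simp: prime_factors_gt_0_nat Suc_leI)
  hence card: "card (prime_factors ?C) \<le> x" using card_mono[of "{1..x}"] by fastforce
  have "?C = (\<Prod>l\<in>prime_factors ?C. l ^ multiplicity l ?C)"
    using prod_prime_factors[of ?C] by simp
  also have "\<dots> \<le> (\<Prod>l\<in>prime_factors ?C. 2 * m)"
    by (rule prod_mono) (auto intro: prime_power_multiplicity_central_binomial_le m)
  also have "\<dots> = (2 * m) ^ card (prime_factors ?C)" by simp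
  also have "\<dots> \<le> (2 * m) ^ x" using card m by (intro power_increasing) auto
  finally show ?thesis .
qed

text \<open>If no prime lay in \<open>(x, 2m]\<close> for \<open>m = x j\<close>, the central binomial coefficient would be at most \<open>(2m)\<^sup>x\<close>,
  which is too small compared with \<open>4\<^sup>m / 2m\<close>.\<close>
lemma exists_prime_between:
  fixes x j :: nat
  assumes x: "x > 0" and j: "j > 0" and small: "2 * x * j < 2 ^ j"
  shows "\<exists>q. prime q \<and> x < q \<and> q \<le> 2 * x * j"
proof (rule ccontr)
  assume none: "\<not> ?thesis"
  define m where "m = x * j"
  have m: "m > 0" using x j by (simp add: m_def)
  have gap: "2 * m < q" if "prime q" "x < q" for q
  proof (rule ccontr)
    assume "\<not> 2 * m < q"
    hence "q \<le> 2 * x * j" by (simp add: m_def mult.assoc)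
    thus False using none that by blast
  qed
  let ?C = "(2 * m) choose m"
  have "l \<le> x" if l: "l \<in> prime_factors ?C" for l
  proof -
    have "?C dvd fact (2 * m)"
      using binomial_fact_lemma[of m "2 * m"] by (metis dvd_triv_right le_add2 mult_2)
    moreover have "prime l" "l dvd ?C" using l by (auto simp: in_prime_factors_iff)
    ultimately have "l \<le> 2 * m" using prime_dvd_fact_iff dvd_trans by blast
    thus "l \<le> x" using gap[OF \<open>prime l\<close>] by (meson leI not_less)
  qed
  hence C: "?C \<le> (2 * m) ^ x" using m by (intro central_binomial_le_power) auto
  have "(4::real) ^ m \<le> real ?C * (2 * real m)"
    using central_binomial_lower_bound[OF m] m by (simp add: divide_le_eq)
  hence "real (4 ^ m) \<le> real (?C * (2 * m))" by simp
  hence "4 ^ m \<le> ?C * (2 * m)" by (simp only: of_nat_le_iff)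
  also have "\<dots> \<le> (2 * m) ^ x * (2 * m)" using C by simp
  also have "\<dots> = (2 * m) ^ (x + 1)" by simp
  also have "\<dots> \<le> (2 * m) ^ (2 * x)" using x m by (intro power_increasing) auto
  also have "\<dots> = ((2 * m) ^ 2) ^ x" by (simp add: power_mult)
  also have "\<dots> < ((2 ^ j) ^ 2) ^ x"
    using small x unfolding m_def by (intro power_strict_mono) (auto simp: mult.assoc)
  also have "\<dots> = (2 ^ 2) ^ (j * x)" by (simp only: power_mult[symmetric] ac_simps)
  also have "\<dots> = 4 ^ m" by (simp add: m_def mult.commute)
  finally show False by simp
qed

lemma two_fourth_power_less_exp:
  fixes j :: nat
  assumes "j \<ge> 30"
  shows "2 * (j + 1) ^ 4 < 2 ^ j"
  using assms
proof (induction j rule: dec_induct)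
  case base
  show ?case by simp
next
  case (step k)
  obtain t where "k = t + 30" using step(1) le_iff_add by (metis add.commute)
  hence "(k + 2) ^ 4 \<le> 2 * (k + 1) ^ 4" by (simp add: power4_eq_xxxx algebra_simps)
  thus ?case using step(3) by simp
qed

lemma exists_floor_root:
  fixes x k :: nat
  assumes "k > 0"
  shows "\<exists>j. j ^ k \<le> x \<and> x < (j + 1) ^ k"
proof (induction x)
  case 0
  show ?case using assms by (intro exI[of _ 0]) simp
next
  case (Suc x)
  then obtain j where j: "j ^ k \<le> x" "x < (j + 1) ^ k" by blast
  show ?case
  proof (cases "Suc x < (j + 1) ^ k")
    case False
    hence "Suc x = (j + 1) ^ k" using j by simp
    moreover have "(j + 1) ^ k < (j + 2) ^ k" using assms by (intro power_strict_mono) auto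
    ultimately show ?thesis by (intro exI[of _ "j + 1"]) simp
  qed (use j in \<open>auto intro: le_SucI\<close>)
qed

lemma S_pos_iff:
  assumes "n > 0"
  shows "S r n > 0 \<longleftrightarrow> (\<forall>p\<in>prime_factors n. r < p)"
proof
  assume pos: "S r n > 0"
  show "\<forall>p\<in>prime_factors n. r < p"
  proof (rule ccontr)
    assume "\<not> ?thesis"
    then obtain p where "p \<in> prime_factors n" "p \<le> r" by auto
    hence "S r n = 0" unfolding S_def by (intro prod_zero) auto
    thus False using pos by simp
  qed
next
  assume "\<forall>p\<in>prime_factors n. r < p"
  thus "S r n > 0" unfolding S_def by (intro prod_pos) (auto simp: prime_factors_gt_0_nat)
qed

lemma in_B_iff: "n \<in> B r \<longleftrightarrow> n > 0 \<and> (\<forall>p\<in>prime_factors n. r < p)"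
  unfolding B_def using S_pos_iff by auto

definition sieve_factor :: "nat \<Rightarrow> nat set \<Rightarrow> real" where
  "sieve_factor r A = (\<Prod>p\<in>A. 1 - real r / real p)"

lemma S_eq_sieve_factor:
  assumes n: "n > 0" and r: "\<forall>p\<in>prime_factors n. r < p"
  shows "real_of_int (S r n) = real n * sieve_factor r (prime_factors n)"
proof -
  have "real_of_int (S r n) = (\<Prod>p\<in>prime_factors n. real p ^ (multiplicity p n - 1) * (real p - real r))"
    unfolding S_def of_int_prod by (intro prod.cong) (use r in auto)
  also have "\<dots> = (\<Prod>p\<in>prime_factors n. real p ^ multiplicity p n * (1 - real r / real p))"
  proof (rule prod.cong[OF refl])
    fix p assume p: "p \<in> prime_factors n"
    have "multiplicity p n > 0" using p n by (simp add: prime_factors_multiplicity)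
    then obtain k where k: "multiplicity p n = Suc k" by (cases "multiplicity p n") auto
    have "real p > 0" using p by (simp add: prime_factors_gt_0_nat)
    thus "real p ^ (multiplicity p n - 1) * (real p - real r) = real p ^ multiplicity p n * (1 - real r / real p)"
      unfolding k by (simp add: field_simps)
  qed
  also have "\<dots> = real (\<Prod>p\<in>prime_factors n. p ^ multiplicity p n) * sieve_factor r (prime_factors n)"
    unfolding sieve_factor_def prod.distrib by simp
  also have "(\<Prod>p\<in>prime_factors n. p ^ multiplicity p n) = n"
    using prod_prime_factors[of n] n by simp
  finally show ?thesis .
qed

lemma sieve_factor_bounds:
  assumes "\<forall>p\<in>A. r < p"
  shows "0 \<le> sieve_factor r A" "sieve_factor r A \<le> 1"
proof -
  have "0 \<le> 1 - real r / real p \<and> 1 - real r / real p \<le> 1" if "p \<in> A" for p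
    using assms that by (auto simp: divide_le_eq_1)
  thus "0 \<le> sieve_factor r A" "sieve_factor r A \<le> 1"
    unfolding sieve_factor_def by (auto intro: prod_nonneg prod_le_1)
qed

lemma sieve_factor_superset_le:
  assumes "finite A'" "insert q A \<subseteq> A'" "q \<notin> A" "\<forall>p\<in>A'. r < p"
  shows "sieve_factor r A' \<le> (1 - real r / real q) * sieve_factor r A"
proof -
  have "sieve_factor r A' = sieve_factor r (A' - insert q A) * sieve_factor r (insert q A)"
    unfolding sieve_factor_def by (rule prod.subset_diff[OF assms(2,1)])
  also have "\<dots> \<le> 1 * sieve_factor r (insert q A)"
    using assms(2,4) sieve_factor_bounds[of "A' - insert q A" r] sieve_factor_bounds[of "insert q A" r]
    by (intro mult_right_mono) auto
  also have "\<dots> = (1 - real r / real q) * sieve_factor r A"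
    using assms(1-3) finite_subset[of A A'] by (simp add: sieve_factor_def)
  finally show ?thesis .
qed

lemma prime_factors_div_prime_power:
  fixes p n :: nat
  assumes p: "prime p" and dvd: "p ^ Suc i dvd n" and n: "n > 0"
  shows "prime_factors (n div p ^ i) = prime_factors n"
proof -
  have dvd_i: "p ^ i dvd n" using dvd by (metis dvd_mult_left power_Suc2)
  hence n_eq: "n = (n div p ^ i) * p ^ i" by simp
  hence "p * p ^ i dvd (n div p ^ i) * p ^ i" using dvd by (simp add: mult.commute)
  hence "p dvd n div p ^ i" using p by (simp add: prime_gt_0_nat)
  moreover have n0: "n div p ^ i > 0" using n dvd_i p by (auto simp: div_greater_zero_iff dvd_imp_le prime_gt_0_nat)
  ultimately have "p \<in> prime_factors (n div p ^ i)" using p by (auto simp: in_prime_factors_iff)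
  moreover have "prime_factors n = prime_factors (n div p ^ i) \<union> prime_factors (p ^ i)"
    using n0 p by (subst n_eq) (simp add: prime_factors_product prime_gt_0_nat)
  moreover have "prime_factors (p ^ i) \<subseteq> {p}" 
    using p by (auto simp: in_prime_factors_iff) (metis prime_dvd_power primes_dvd_imp_eq)
  ultimately show ?thesis by auto
qed

lemma prime_dvd_one_plus_fact_mult_gt:
  fixes l r k :: nat
  assumes "prime l" "l dvd 1 + fact r * k"
  shows "r < l"
proof (rule ccontr)
  assume "\<not> r < l"
  hence "l dvd fact r * k" using prime_ge_1_nat[OF assms(1)] by (intro dvd_mult2 dvd_fact) auto
  hence "l dvd 1" by (metis assms(2) dvd_add_left_iff)
  thus False using assms(1) by simp
qed

text \<open>The interval \<open>(D/q, D/(q - r)]\<close> has length \<open>D r / (q (q - r)) > R\<close>, so it contains an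
  integer \<open>\<equiv> 1 (mod R)\<close>: take the largest one below \<open>\<lfloor>D/(q - r)\<rfloor>\<close>.\<close>
lemma exists_one_mod_in_interval:
  fixes q r R D :: nat
  assumes R: "R > 0" and r: "r > 0" "r < q" and big: "q * q * R < D"
  shows "\<exists>k. (1 + R * k) * (q - r) \<le> D \<and> D < q * (1 + R * k)"
proof -
  define d where "d = q - r"
  have d: "d > 0" "q = d + r" using r unfolding d_def by auto
  define U where "U = D div d"
  have Ud: "U * d \<le> D" "D < (U + 1) * d"
  proof -
    show "U * d \<le> D" unfolding U_def by (rule div_times_less_eq_dividend)
    have "D = U * d + D mod d" unfolding U_def by simp
    thus "D < (U + 1) * d" using mod_less_divisor[OF d(1), of D] by simp
  qed
  have "(q * R) * d \<le> q * q * R" using d(2) by simp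
  also have "\<dots> < (U + 1) * d" using big Ud(2) by simp
  finally have qR: "q * R < U + 1" by (rule mult_less_cancel2[THEN iffD1, THEN conjunct2])
  moreover have "1 \<le> q * R" using R r by simp
  ultimately have U: "U \<ge> 1" by linarith
  define k where "k = (U - 1) div R"
  define w where "w = 1 + R * k"
  have "U - 1 = R * k + (U - 1) mod R" unfolding k_def by simp
  moreover have "(U - 1) mod R < R" using R by simp
  ultimately have w: "w \<le> U" "U < w + R" unfolding w_def using U by linarith+
  have "w * d \<le> D" using w(1) Ud(1) by (meson le_trans mult_le_mono1)
  moreover have "D < q * w"
  proof -
    have "q * (U + 1) \<le> q * (w + R)" using w(2) by (intro mult_le_mono2) simp
    moreover have "q * (U + 1) = (U + 1) * d + r * (U + 1)" using d(2) by (simp add: algebra_simps)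
    moreover have "U + 1 \<le> r * (U + 1)" using mult_le_mono1[of 1 r "U + 1"] r(1) by simp
    ultimately show ?thesis using Ud(2) qR by (simp add: algebra_simps)
  qed
  ultimately show ?thesis unfolding w_def d_def by blast
qed

lemma S_replace_factor_le:
  fixes n' D q w r :: nat
  assumes n': "n' > 0" "\<forall>l\<in>prime_factors n'. r < l" and D: "D > 0"
    and pf_D: "prime_factors (n' * D) = prime_factors n'"
    and q: "prime q" "r < q" "q \<notin> prime_factors n'"
    and w: "w > 0" "\<forall>l\<in>prime_factors w. r < l" "w * (q - r) \<le> D"
  shows "S r (n' * q * w) \<le> S r (n' * D)"
proof -
  let ?\<sigma> = "sieve_factor r (prime_factors n')"
  define m where "m = n' * q * w"
  have "q > 0" using q(1) prime_gt_0_nat by blast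
  have pf_m: "prime_factors m = insert q (prime_factors n') \<union> prime_factors w"
    unfolding m_def using n'(1) w(1) q(1) by (simp add: prime_factors_product prime_prime_factors)
  hence m_r: "\<forall>l\<in>prime_factors m. r < l" using n'(2) q(2) w(2) by auto
  have "0 \<le> ?\<sigma>" using n'(2) by (rule sieve_factor_bounds)
  have "real_of_int (S r m) = real m * sieve_factor r (prime_factors m)"
    using m_r \<open>q > 0\<close> n'(1) w(1) unfolding m_def by (intro S_eq_sieve_factor) auto
  also have "\<dots> \<le> real m * ((1 - real r / real q) * ?\<sigma>)"
    using pf_m q(3) m_r by (intro mult_left_mono sieve_factor_superset_le) auto
  also have "\<dots> = real n' * (real w * real (q - r)) * ?\<sigma>"
    using \<open>q > 0\<close> q(2) unfolding m_def by (simp add: field_simps of_nat_diff)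
  also have "\<dots> \<le> real n' * real D * ?\<sigma>"
    using w(3) \<open>0 \<le> ?\<sigma>\<close> by (intro mult_right_mono mult_left_mono) (simp_all flip: of_nat_mult)
  also have "\<dots> = real_of_int (S r (n' * D))"
    using S_eq_sieve_factor[of "n' * D" r] n' D pf_D by simp
  finally show ?thesis unfolding m_def by linarith
qed

text \<open>The extra factor \<open>p\<close> ensures that \<open>n div p\<^sup>i\<close> has the same prime factors as \<open>n\<close>.\<close>
lemma F_prime_power_le:
  fixes n p q r i :: nat
  assumes F: "n \<in> F r" and r: "r > 0" and p: "prime p" "p ^ Suc i dvd n"
    and q: "prime q" "r < q" "\<not> q dvd n"
  shows "p ^ i \<le> q\<^sup>2 * fact r"
proof (rule ccontr)
  define D where "D = p ^ i"
  define n' where "n' = n div D"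
  assume "\<not> ?thesis"
  hence "q * q * fact r < D" unfolding D_def by (simp add: power2_eq_square)
  then obtain k where "(1 + fact r * k) * (q - r) \<le> D" "D < q * (1 + fact r * k)"
    using exists_one_mod_in_interval[of "fact r" r q D] r q by auto
  define w where "w = 1 + fact r * k"
  have w: "w * (q - r) \<le> D" "D < q * w" unfolding w_def by fact+
  have w_r: "\<forall>l\<in>prime_factors w. r < l"
    unfolding w_def by (auto simp: in_prime_factors_iff intro: prime_dvd_one_plus_fact_mult_gt)
  have n: "n > 0" "\<forall>l\<in>prime_factors n. r < l" "\<forall>m\<in>B r. n < m \<longrightarrow> S r n < S r m"
    using F unfolding F_def in_B_iff by auto
  have pf_n': "prime_factors n' = prime_factors n"
    unfolding n'_def D_def using p n(1) by (rule prime_factors_div_prime_power)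
  have "D > 0" unfolding D_def using p(1) by (simp add: prime_gt_0_nat)
  have n': "n' > 0" "n = n' * D"
    using pf_n' n(1) p unfolding n'_def D_def
    by (auto simp: dvd_div_mult_self dvd_mult_left[OF p(2)[unfolded power_Suc2]] intro!: Nat.gr0I)
  define m where "m = n' * q * w"
  have "S r m \<le> S r n"
    unfolding m_def n'(2) using n'(1) \<open>D > 0\<close> pf_n' n(2) q w_r w(1) n'(2)
    by (intro S_replace_factor_le) (auto simp: w_def)
  moreover have "m \<in> B r"
  proof -
    have "w > 0" "q > 0" using q(1) prime_gt_0_nat unfolding w_def by auto
    hence "prime_factors m = insert q (prime_factors n) \<union> prime_factors w"
      unfolding m_def using n'(1) q(1) pf_n' by (simp add: prime_factors_product prime_prime_factors)
    thus ?thesis unfolding in_B_iff m_def using \<open>w > 0\<close> \<open>q > 0\<close> n'(1) n(2) q(2) w_r by auto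
  qed
  moreover have "n < m" unfolding m_def using mult_less_mono2[OF w(2) n'(1)] n'(2) by (simp add: mult.assoc)
  ultimately show False using n(3) by fastforce
qed

lemma P1_in_prime_factors:
  fixes n :: nat
  assumes "n > 1"
  shows "P1 n \<in> prime_factors n"
proof -
  obtain p where "prime p" "p dvd n" using prime_factor_nat[of n] assms by auto
  hence "p \<in> prime_factors n" using assms by (auto simp: in_prime_factors_iff)
  hence "prime_factors n \<noteq> {}" by blast
  thus ?thesis unfolding P1_def using assms by simp
qed

lemma prime_factor_le_P1:
  fixes l n :: nat
  assumes "l \<in> prime_factors n"
  shows "l \<le> P1 n"
proof -
  have "prime l" "l dvd n" "n > 0" using assms by (auto simp: in_prime_factors_iff)
  hence "n > 1" using prime_gt_1_nat dvd_imp_le le_less_trans by (metis less_le_trans)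
  thus ?thesis using assms unfolding P1_def by simp
qed

lemma F_P1_fourth_power_dvd_imp_less:
  fixes n r :: nat
  assumes F: "n \<in> F r" and r: "r > 0" and dvd: "P1 n ^ 4 dvd n"
  shows "P1 n < (4 * fact r + 30) ^ 3"
proof (rule ccontr)
  define p where "p = P1 n"
  assume "\<not> ?thesis"
  hence large: "(4 * fact r + 30) ^ 3 \<le> p" unfolding p_def by simp
  have "n > 1"
  proof (rule ccontr)
    assume "\<not> n > 1"
    hence "p = 1" unfolding p_def P1_def by simp
    moreover have "1 < (4 * fact r + 30 :: nat) ^ 3" by (rule one_less_power) auto
    ultimately show False using large by simp
  qed
  hence p: "p \<in> prime_factors n" unfolding p_def by (rule P1_in_prime_factors)
  obtain j where j: "j ^ 3 \<le> p" "p < (j + 1) ^ 3" using exists_floor_root[of 3 p] by auto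
  have "4 * fact r + 30 \<le> j"
  proof (rule ccontr)
    assume "\<not> ?thesis"
    hence "(j + 1) ^ 3 \<le> (4 * fact r + 30) ^ 3" by (intro power_mono) auto
    thus False using j(2) large by linarith
  qed
  hence j30: "j \<ge> 30" and jR: "4 * fact r < j" by auto
  have "p * j < (j + 1) ^ 3 * (j + 1)" using j(2) j30 by (intro mult_strict_mono) auto
  also have "\<dots> = (j + 1) ^ 4" by (simp only: power3_eq_cube power4_eq_xxxx)
  finally have "2 * p * j < 2 * (j + 1) ^ 4" by simp
  also have "\<dots> < 2 ^ j" using j30 by (rule two_fourth_power_less_exp)
  finally obtain q where q: "prime q" "p < q" "q \<le> 2 * p * j"
    using exists_prime_between[of p j] p j30 by (auto simp: prime_factors_gt_0_nat)
  have "\<not> q dvd n"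
  proof
    assume "q dvd n"
    hence "q \<in> prime_factors n" using q(1) \<open>n > 1\<close> by (auto simp: in_prime_factors_iff)
    thus False using prime_factor_le_P1 q(2) unfolding p_def by fastforce
  qed
  moreover have "r < q" using p q(2) F unfolding F_def in_B_iff by auto
  moreover have "p ^ Suc 3 dvd n" using dvd unfolding p_def by simp
  ultimately have "p ^ 3 \<le> q\<^sup>2 * fact r"
    using F r p q(1) by (intro F_prime_power_le) (auto simp: in_prime_factors_iff)
  also have "\<dots> \<le> (2 * p * j)\<^sup>2 * fact r" using q(3) by (intro mult_right_mono power_mono) auto
  also have "\<dots> = p\<^sup>2 * (4 * fact r * j\<^sup>2)" by (simp add: power_mult_distrib algebra_simps)
  also have "\<dots> < p\<^sup>2 * (j * j\<^sup>2)"
  proof -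
    have "4 * fact r * j\<^sup>2 < j * j\<^sup>2" using jR j30 by (intro mult_strict_right_mono) auto
    moreover have "p > 0" using p by (simp add: prime_factors_gt_0_nat)
    ultimately show ?thesis by simp
  qed
  also have "\<dots> \<le> p ^ 3" using j(1) by (simp add: power2_eq_square power3_eq_cube)
  finally show False by simp
qed

lemma F_bounded_if_prime_factors_bounded:
  fixes r K :: nat
  assumes r: "r > 0"
  shows "\<exists>N. \<forall>n\<in>F r. (\<forall>l\<in>prime_factors n. l < K) \<longrightarrow> n < N"
proof -
  obtain Q where Q: "prime Q" "K + r < Q" using bigger_prime by blast
  define T where "T = K * Q\<^sup>2 * fact r + 1"
  have "n < T ^ K + 1" if F: "n \<in> F r" and small: "\<forall>l\<in>prime_factors n. l < K" for n
  proof -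
    have n: "n > 0" using F unfolding F_def in_B_iff by auto
    have pp: "l ^ multiplicity l n \<le> T" if l: "l \<in> prime_factors n" for l
    proof -
      define e where "e = multiplicity l n"
      have e: "e = Suc (e - 1)" using l n unfolding e_def by (simp add: prime_factors_multiplicity)
      have "\<not> Q dvd n"
      proof
        assume "Q dvd n"
        hence "Q \<in> prime_factors n" using Q n by (auto simp: in_prime_factors_iff)
        thus False using small Q by fastforce
      qed
      hence "l ^ (e - 1) \<le> Q\<^sup>2 * fact r"
        using F r l Q multiplicity_dvd[of l n] e
        by (intro F_prime_power_le) (auto simp: e_def in_prime_factors_iff)
      hence "l * l ^ (e - 1) \<le> K * (Q\<^sup>2 * fact r)" using small l by (intro mult_mono) auto
      moreover have "l ^ e = l * l ^ (e - 1)" using e by (metis power_Suc)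
      ultimately show ?thesis unfolding T_def e_def by (simp add: mult.assoc)
    qed
    have "n = (\<Prod>l\<in>prime_factors n. l ^ multiplicity l n)" using prod_prime_factors[of n] n by simp
    also have "\<dots> \<le> (\<Prod>l\<in>prime_factors n. T)" by (intro prod_mono) (auto intro: pp)
    also have "\<dots> = T ^ card (prime_factors n)" by simp
    also have "\<dots> \<le> T ^ K"
      using card_mono[of "{..<K}" "prime_factors n"] small unfolding T_def
      by (intro power_increasing) auto
    finally show ?thesis by simp
  qed
  thus ?thesis by blast
qed

theorem corollary3p2:
  fixes r :: nat
  assumes "r > 0"
  shows "\<exists>N. \<forall>n \<in> F r. n \<ge> N \<longrightarrow> \<not> (P1 n ^ 4 dvd n)"
proof -
  define K :: nat where "K = (4 * fact r + 30) ^ 3"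
  obtain N where N: "\<forall>n\<in>F r. (\<forall>l\<in>prime_factors n. l < K) \<longrightarrow> n < N"
    using F_bounded_if_prime_factors_bounded[OF assms] by blast
  have "\<not> P1 n ^ 4 dvd n" if "n \<in> F r" "N \<le> n" for n
  proof
    assume "P1 n ^ 4 dvd n"
    hence "P1 n < K" unfolding K_def using that(1) assms by (intro F_P1_fourth_power_dvd_imp_less)
    hence "\<forall>l\<in>prime_factors n. l < K" using prime_factor_le_P1 le_less_trans by blast
    thus False using N that by fastforce
  qed
  thus ?thesis by blast
qed

end
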